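(* Let $G$ be either (a) the grid $P_3 \,\square\, P_n$ with $n\ge 3$, or (b) the grid $P_4\,\square\, P_n$ with $n\ge 4$. Then $$\gamma_t(G) \ge \left\lceil \frac{3\gamma(G)+2\gamma_c(G)}{6}\right\rceil.$$
   Context: All graphs are finite, simple and undirected. $P_m$ denotes the path on $m$ vertices. For graphs $G,H$, the Cartesian product $G\,\square\, H$ has vertex set $V(G)\times V(H)$, with $(u_1,v_1)$ adjacent to $(u_2,v_2)$ iff either $u_1=u_2$ and $v_1v_2\in E(H)$, or $v_1=v_2$ and $u_1u_2\in E(G)$. A set $S\subseteq V(G)$ is a dominating set if every vertex not in $S$ is adjacent to some vertex of $S$; $\gamma(G)$ is the minimum size of a dominating set. A set $S$ is a total dominating set if every vertex of $G$ (including those in $S$) is adjacent to some vertex of $S$; $\gamma_t(G)$ is the minimum size of a total dominating set. A set $S$ is a connected dominating set if it is dominating and the subgraph induced by $S$ is connected; $\gamma_c(G)$ is the minimum size of a connected dominating set. *)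

theory Defs
  imports Complex_Main
begin

(* A finite simple graph is given by a vertex set V and a symmetric irreflexive
   adjacency relation E (only its restriction to V matters). *)

definition dominating :: "'a set \<Rightarrow> ('a \<Rightarrow> 'a \<Rightarrow> bool) \<Rightarrow> 'a set \<Rightarrow> bool" where
  "dominating V E S \<longleftrightarrow> S \<subseteq> V \<and> (\<forall>v\<in>V - S. \<exists>u\<in>S. E u v)"

definition total_dominating :: "'a set \<Rightarrow> ('a \<Rightarrow> 'a \<Rightarrow> bool) \<Rightarrow> 'a set \<Rightarrow> bool" where
  "total_dominating V E S \<longleftrightarrow> S \<subseteq> V \<and> (\<forall>v\<in>V. \<exists>u\<in>S. E u v)"

definition induced_connected :: "('a \<Rightarrow> 'a \<Rightarrow> bool) \<Rightarrow> 'a set \<Rightarrow> bool" where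
  "induced_connected E S \<longleftrightarrow> S \<noteq> {} \<and>
     (\<forall>x\<in>S. \<forall>y\<in>S. (\<lambda>a b. a \<in> S \<and> b \<in> S \<and> E a b)\<^sup>*\<^sup>* x y)"

definition connected_dominating :: "'a set \<Rightarrow> ('a \<Rightarrow> 'a \<Rightarrow> bool) \<Rightarrow> 'a set \<Rightarrow> bool" where
  "connected_dominating V E S \<longleftrightarrow> dominating V E S \<and> induced_connected E S"

definition domination_number :: "'a set \<Rightarrow> ('a \<Rightarrow> 'a \<Rightarrow> bool) \<Rightarrow> nat" where
  "domination_number V E = (LEAST k. \<exists>S. dominating V E S \<and> card S = k)"

definition total_domination_number :: "'a set \<Rightarrow> ('a \<Rightarrow> 'a \<Rightarrow> bool) \<Rightarrow> nat" where
  "total_domination_number V E = (LEAST k. \<exists>S. total_dominating V E S \<and> card S = k)"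

definition connected_domination_number :: "'a set \<Rightarrow> ('a \<Rightarrow> 'a \<Rightarrow> bool) \<Rightarrow> nat" where
  "connected_domination_number V E = (LEAST k. \<exists>S. connected_dominating V E S \<and> card S = k)"

definition path_verts :: "nat \<Rightarrow> nat set" where
  "path_verts m = {0..<m}"

definition path_adj :: "nat \<Rightarrow> nat \<Rightarrow> bool" where
  "path_adj i j \<longleftrightarrow> i = j + 1 \<or> j = i + 1"

definition cart_verts :: "'a set \<Rightarrow> 'b set \<Rightarrow> ('a \<times> 'b) set" where
  "cart_verts V W = V \<times> W"

definition cart_adj :: "('a \<Rightarrow> 'a \<Rightarrow> bool) \<Rightarrow> ('b \<Rightarrow> 'b \<Rightarrow> bool) \<Rightarrow> 'a \<times> 'b \<Rightarrow> 'a \<times> 'b \<Rightarrow> bool" where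
  "cart_adj E F p q \<longleftrightarrow> (fst p = fst q \<and> F (snd p) (snd q)) \<or> (snd p = snd q \<and> E (fst p) (fst q))"

definition grid_verts :: "nat \<Rightarrow> nat \<Rightarrow> (nat \<times> nat) set" where
  "grid_verts m n = cart_verts (path_verts m) (path_verts n)"

definition grid_adj :: "nat \<times> nat \<Rightarrow> nat \<times> nat \<Rightarrow> bool" where
  "grid_adj = cart_adj path_adj path_adj"

end

theory Submission
  imports Defs
begin

text \<open>
  A vertex \<open>(r, j)\<close> lies in row \<open>r\<close> and column \<open>j\<close>.
  For \<open>P\<^sub>3 \<box> P\<^sub>n\<close> the middle row is a connected dominating set, so
  \<open>\<gamma>, \<gamma>\<^sub>c \<le> n\<close>; every vertex is adjacent to at most two of the \<open>2n\<close> vertices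
  of the outer rows, so \<open>\<gamma>\<^sub>t \<ge> n\<close>.

  For \<open>P\<^sub>4 \<box> P\<^sub>n\<close>, give the outer-row vertices weight 2 and the inner ones weight 1.
  The grid has total weight \<open>6n\<close> and every vertex is adjacent to weight at most 5,
  so \<open>5\<gamma>\<^sub>t \<ge> 6n\<close>. One vertex per column, in rows 1, 3, 0, 2 periodically (plus one
  vertex in the last column unless \<open>4\<close> divides \<open>n\<close>), is dominating; row 1 together
  with vertical stubs in rows 2 and 3 at every third column is a connected dominating
  set of size at most \<open>n + 2\<lceil>n/3\<rceil>\<close>.
\<close>

lemma domination_number_le: "dominating V E S \<Longrightarrow> domination_number V E \<le> card S"
  unfolding domination_number_def by (rule Least_le) blast

lemma connected_domination_number_le:
  "connected_dominating V E S \<Longrightarrow> connected_domination_number V E \<le> card S"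
  unfolding connected_domination_number_def by (rule Least_le) blast

lemma total_domination_number_attained:
  assumes "total_dominating V E S"
  obtains T where "total_dominating V E T" "card T = total_domination_number V E"
proof -
  have "\<exists>k T. total_dominating V E T \<and> card T = k" using assms by blast
  then have "\<exists>T. total_dominating V E T \<and> card T = total_domination_number V E"
    unfolding total_domination_number_def by (rule LeastI_ex)
  then show ?thesis using that by blast
qed

lemma card_le_sum_card_neighbours:
  assumes "finite V" "total_dominating V E S" "B \<subseteq> V"
  shows "card B \<le> (\<Sum>u\<in>S. card {b \<in> B. E u b})"
proof -
  have "finite S" "finite B"
    using assms by (auto simp: total_dominating_def intro: finite_subset)
  have "B = (\<Union>u\<in>S. {b \<in> B. E u b})"
    using assms(2,3) by (auto simp: total_dominating_def)
  also have "card \<dots> \<le> (\<Sum>u\<in>S. card {b \<in> B. E u b})"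
    using \<open>finite S\<close> by (rule card_UN_le)
  finally show ?thesis .
qed

definition induced_adj :: "('a \<Rightarrow> 'a \<Rightarrow> bool) \<Rightarrow> 'a set \<Rightarrow> 'a \<Rightarrow> 'a \<Rightarrow> bool" where
  "induced_adj E S a b \<longleftrightarrow> a \<in> S \<and> b \<in> S \<and> E a b"

lemma induced_connectedI:
  assumes sym: "\<And>a b. E a b \<Longrightarrow> E b a"
    and "z \<in> S" and to_z: "\<And>x. x \<in> S \<Longrightarrow> (induced_adj E S)\<^sup>*\<^sup>* x z"
  shows "induced_connected E S"
proof -
  have "symp (induced_adj E S)"
    unfolding symp_def induced_adj_def using sym by blast
  then have "(induced_adj E S)\<^sup>*\<^sup>* x y" if "x \<in> S" "y \<in> S" for x y
    using to_z[OF that(1)] to_z[OF that(2)]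
    by (meson rtranclp_trans symp_rtranclp sympD)
  then show ?thesis
    using \<open>z \<in> S\<close> unfolding induced_connected_def induced_adj_def by blast
qed

lemma grid_adj_iff:
  "grid_adj (a, b) (c, d) \<longleftrightarrow>
    a = c \<and> (b = d + 1 \<or> d = b + 1) \<or> b = d \<and> (a = c + 1 \<or> c = a + 1)"
  by (auto simp: grid_adj_def cart_adj_def path_adj_def)

lemma grid_adj_sym: "grid_adj x y \<Longrightarrow> grid_adj y x"
  by (auto simp: grid_adj_def cart_adj_def path_adj_def)

lemma mem_grid_verts [simp]: "(a, b) \<in> grid_verts m n \<longleftrightarrow> a < m \<and> b < n"
  by (simp add: grid_verts_def cart_verts_def path_verts_def)

lemma finite_grid_verts: "finite (grid_verts m n)"
  by (simp add: grid_verts_def cart_verts_def path_verts_def)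

lemma total_dominating_grid_verts:
  assumes "2 \<le> m"
  shows "total_dominating (grid_verts m n) grid_adj (grid_verts m n)"
  unfolding total_dominating_def
proof (intro conjI ballI subset_refl)
  fix v assume "v \<in> grid_verts m n"
  moreover obtain a b where "v = (a, b)" by fastforce
  ultimately show "\<exists>u\<in>grid_verts m n. grid_adj u v"
    using assms
    by (intro bexI[of _ "(if a = 0 then 1 else a - 1, b)"]) (auto simp: grid_adj_iff)
qed

lemma grid_row_connected:
  assumes "{r} \<times> {..<n} \<subseteq> S" "j < n"
  shows "(induced_adj grid_adj S)\<^sup>*\<^sup>* (r, j) (r, 0)"
  using assms(2)
proof (induction j)
  case (Suc j)
  then have "induced_adj grid_adj S (r, Suc j) (r, j)"
    using assms(1) by (auto simp: induced_adj_def grid_adj_iff)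
  with Suc show ?case by (meson converse_rtranclp_into_rtranclp Suc_lessD)
qed simp

lemma card_le_length: "A \<subseteq> set xs \<Longrightarrow> card A \<le> length xs"
  using card_mono[of "set xs" A] card_length[of xs] by simp

lemma card_grid_neighbours_outer_rows3:
  assumes "a < 3"
  shows "card {b \<in> {0, 2} \<times> J. grid_adj (a, c) b} \<le> 2"
proof -
  have "{b \<in> {0, 2} \<times> J. grid_adj (a, c) b}
      \<subseteq> set (if a = 1 then [(0, c), (2, c)] else [(a, c - 1), (a, c + 1)])"
    using assms by (auto simp: grid_adj_iff)
  from card_le_length[OF this] show ?thesis by (simp split: if_split_asm)
qed

lemma grid3_total_domination_number_ge:
  "n \<le> total_domination_number (grid_verts 3 n) grid_adj"
proof -
  have "total_dominating (grid_verts 3 n) grid_adj (grid_verts 3 n)"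
    by (rule total_dominating_grid_verts) simp
  then obtain S where S: "total_dominating (grid_verts 3 n) grid_adj S"
    and card_S: "card S = total_domination_number (grid_verts 3 n) grid_adj"
    by (rule total_domination_number_attained)
  have "2 * n = card ({0, 2::nat} \<times> {..<n})"
    by (simp add: card_cartesian_product)
  also have "\<dots> \<le> (\<Sum>u\<in>S. card {b \<in> {0, 2} \<times> {..<n}. grid_adj u b})"
    by (rule card_le_sum_card_neighbours[OF finite_grid_verts S]) auto
  also have "\<dots> \<le> (\<Sum>u\<in>S. 2)"
  proof (rule sum_mono)
    fix u assume "u \<in> S"
    moreover obtain a c where "u = (a, c)" by fastforce
    ultimately show "card {b \<in> {0, 2} \<times> {..<n}. grid_adj u b} \<le> 2"
      using S card_grid_neighbours_outer_rows3[of a] by (auto simp: total_dominating_def)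
  qed
  finally show ?thesis using card_S by simp
qed

lemma card_grid_neighbours_weighted4:
  assumes "a < 4"
  shows "2 * card {b \<in> {0, 3} \<times> J. grid_adj (a, c) b}
    + card {b \<in> {1, 2} \<times> J. grid_adj (a, c) b} \<le> 5"
proof (cases "a \<in> {0, 3}")
  case True
  then have "{b \<in> {0, 3} \<times> J. grid_adj (a, c) b} \<subseteq> set [(a, c - 1), (a, c + 1)]"
    and "{b \<in> {1, 2} \<times> J. grid_adj (a, c) b} \<subseteq> set [(if a = 0 then 1 else 2, c)]"
    by (auto simp: grid_adj_iff)
  from this[THEN card_le_length] show ?thesis by simp
next
  case False
  then have "{b \<in> {0, 3} \<times> J. grid_adj (a, c) b} \<subseteq> set [(3 * (a - 1), c)]"
    and "{b \<in> {1, 2} \<times> J. grid_adj (a, c) b} \<subseteq> set [(a, c - 1), (a, c + 1), (3 - a, c)]"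
    using assms by (auto simp: grid_adj_iff)
  from this[THEN card_le_length] show ?thesis by simp
qed

lemma grid4_total_domination_number_ge:
  "6 * n \<le> 5 * total_domination_number (grid_verts 4 n) grid_adj"
proof -
  have "total_dominating (grid_verts 4 n) grid_adj (grid_verts 4 n)"
    by (rule total_dominating_grid_verts) simp
  then obtain S where S: "total_dominating (grid_verts 4 n) grid_adj S"
    and card_S: "card S = total_domination_number (grid_verts 4 n) grid_adj"
    by (rule total_domination_number_attained)
  let ?N = "\<lambda>R u. card {b \<in> R \<times> {..<n}. grid_adj u b}"
  have "6 * n = 2 * card ({0, 3::nat} \<times> {..<n}) + card ({1, 2::nat} \<times> {..<n})"
    by (simp add: card_cartesian_product)
  also have "\<dots> \<le> 2 * (\<Sum>u\<in>S. ?N {0, 3} u) + (\<Sum>u\<in>S. ?N {1, 2} u)"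
    by (intro add_mono mult_le_mono2 card_le_sum_card_neighbours[OF finite_grid_verts S]) auto
  also have "\<dots> = (\<Sum>u\<in>S. 2 * ?N {0, 3} u + ?N {1, 2} u)"
    by (simp add: sum.distrib sum_distrib_left)
  also have "\<dots> \<le> (\<Sum>u\<in>S. 5)"
  proof (rule sum_mono)
    fix u assume "u \<in> S"
    moreover obtain a c where "u = (a, c)" by fastforce
    ultimately show "2 * ?N {0, 3} u + ?N {1, 2} u \<le> 5"
      using S card_grid_neighbours_weighted4[of a] by (auto simp: total_dominating_def)
  qed
  finally show ?thesis using card_S by simp
qed

lemma grid3_middle_row_connected_dominating:
  assumes "1 \<le> n"
  shows "connected_dominating (grid_verts 3 n) grid_adj ({1} \<times> {..<n})"
  unfolding connected_dominating_def dominating_def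
proof (intro conjI ballI)
  show "{1} \<times> {..<n} \<subseteq> grid_verts 3 n" by auto
next
  fix v assume "v \<in> grid_verts 3 n - {1} \<times> {..<n}"
  moreover obtain a b where "v = (a, b)" by fastforce
  ultimately show "\<exists>u\<in>{1} \<times> {..<n}. grid_adj u v"
    by (intro bexI[of _ "(1, b)"]) (auto simp: grid_adj_iff)
next
  show "induced_connected grid_adj ({1} \<times> {..<n})"
  proof (rule induced_connectedI[OF grid_adj_sym])
    show "(1, 0) \<in> {1::nat} \<times> {..<n}" using assms by simp
  next
    fix x assume "x \<in> {1::nat} \<times> {..<n}"
    then show "(induced_adj grid_adj ({1} \<times> {..<n}))\<^sup>*\<^sup>* x (1, 0)"
      using grid_row_connected[OF subset_refl] by auto
  qed
qed

lemma grid3_domination_numbers_le: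
  assumes "1 \<le> n"
  shows "domination_number (grid_verts 3 n) grid_adj \<le> n"
    and "connected_domination_number (grid_verts 3 n) grid_adj \<le> n"
proof -
  note row = grid3_middle_row_connected_dominating[OF assms]
  have card_row: "card ({1::nat} \<times> {..<n}) = n"
    by (simp add: card_cartesian_product)
  show "domination_number (grid_verts 3 n) grid_adj \<le> n"
    using row domination_number_le card_row unfolding connected_dominating_def by metis
  show "connected_domination_number (grid_verts 3 n) grid_adj \<le> n"
    using connected_domination_number_le[OF row] card_row by simp
qed

definition stub_columns :: "nat \<Rightarrow> nat set" where
  "stub_columns n = (\<lambda>q. min (3 * q + 1) (n - 1)) ` {..<(n + 2) div 3}"

lemma card_stub_columns: "card (stub_columns n) \<le> (n + 2) div 3"
  unfolding stub_columns_def using card_image_le[of "{..<(n + 2) div 3}"] by simp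

lemma stub_columns_less: "c \<in> stub_columns n \<Longrightarrow> c < n"
  by (cases n) (auto simp: stub_columns_def)

lemma stub_column_near:
  assumes "j < n"
  obtains c where "c \<in> stub_columns n" "j \<le> c + 1" "c \<le> j + 1"
proof
  let ?q = "j div 3"
  have "3 * ?q \<le> j" "j \<le> 3 * ?q + 2"
    using div_mult_mod_eq[of j 3] mod_less_divisor[of 3 j] by linarith+
  then have "?q < (n + 2) div 3"
    using assms by (simp add: less_eq_div_iff_mult_less_eq flip: Suc_le_eq)
  then show "min (3 * ?q + 1) (n - 1) \<in> stub_columns n"
    unfolding stub_columns_def by blast
  show "j \<le> min (3 * ?q + 1) (n - 1) + 1" "min (3 * ?q + 1) (n - 1) \<le> j + 1"
    using \<open>3 * ?q \<le> j\<close> \<open>j \<le> 3 * ?q + 2\<close> assms by linarith+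
qed

definition grid4_stub_set :: "nat \<Rightarrow> (nat \<times> nat) set" where
  "grid4_stub_set n = {1} \<times> {..<n} \<union> {2, 3} \<times> stub_columns n"

lemma card_grid4_stub_set: "card (grid4_stub_set n) \<le> n + 2 * ((n + 2) div 3)"
proof -
  have "card (grid4_stub_set n) \<le> card ({1::nat} \<times> {..<n}) + card ({2, 3::nat} \<times> stub_columns n)"
    unfolding grid4_stub_set_def by (rule card_Un_le)
  also have "\<dots> = n + 2 * card (stub_columns n)"
    by (simp add: card_cartesian_product)
  finally show ?thesis using card_stub_columns[of n] by linarith
qed

lemma grid4_stub_set_dominating: "dominating (grid_verts 4 n) grid_adj (grid4_stub_set n)"
  unfolding dominating_def
proof (intro conjI ballI)
  show "grid4_stub_set n \<subseteq> grid_verts 4 n"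
    by (auto simp: grid4_stub_set_def dest: stub_columns_less)
next
  fix v assume v: "v \<in> grid_verts 4 n - grid4_stub_set n"
  obtain a b where ab: "v = (a, b)" by fastforce
  show "\<exists>u\<in>grid4_stub_set n. grid_adj u v"
  proof (cases "a = 3")
    case True
    obtain c where c: "c \<in> stub_columns n" "b \<le> c + 1" "c \<le> b + 1"
      using stub_column_near v ab by auto
    moreover have "c \<noteq> b"
      using c True v ab by (auto simp: grid4_stub_set_def)
    ultimately show ?thesis using True ab
      by (intro bexI[of _ "(3, c)"]) (auto simp: grid4_stub_set_def grid_adj_iff)
  next
    case False
    with v ab show ?thesis
      by (intro bexI[of _ "(1, b)"]) (auto simp: grid4_stub_set_def grid_adj_iff)
  qed
qed

lemma grid4_stub_set_connected:
  assumes "1 \<le> n"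
  shows "induced_connected grid_adj (grid4_stub_set n)"
proof (rule induced_connectedI[OF grid_adj_sym])
  let ?R = "induced_adj grid_adj (grid4_stub_set n)"
  show "(1, 0) \<in> grid4_stub_set n" using assms by (simp add: grid4_stub_set_def)
  have row: "{1} \<times> {..<n} \<subseteq> grid4_stub_set n" by (auto simp: grid4_stub_set_def)
  fix x assume x: "x \<in> grid4_stub_set n"
  then obtain a c where xac: "x = (a, c)" "c < n" "a \<in> {1, 2, 3}"
    by (auto simp: grid4_stub_set_def dest: stub_columns_less)
  have "?R\<^sup>*\<^sup>* (a, c) (1, c)"
  proof -
    have "?R (3, c) (2, c)" "?R (2, c) (1, c)" if "a \<noteq> 1"
      using x xac that by (auto simp: induced_adj_def grid4_stub_set_def grid_adj_iff)
    then show ?thesis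
      using xac by (auto intro: converse_rtranclp_into_rtranclp)
  qed
  also have "?R\<^sup>*\<^sup>* (1, c) (1, 0)"
    using grid_row_connected[OF row \<open>c < n\<close>] .
  finally show "?R\<^sup>*\<^sup>* x (1, 0)" using xac by simp
qed

definition diag_row :: "nat \<Rightarrow> nat" where
  "diag_row j = [1, 3, 0, 2] ! (j mod 4)"

lemma diag_row_less: "diag_row j < 4"
proof -
  have "diag_row j \<in> set [1, 3, 0, 2]"
    unfolding diag_row_def by (rule nth_mem) simp
  then show ?thesis by auto
qed

lemma diag_row_near:
  assumes "r < 4"
  shows "r = diag_row j \<or> r = diag_row j + 1 \<or> diag_row j = r + 1
    \<or> (0 < j \<and> diag_row (j - 1) = r) \<or> (diag_row (Suc j) = r \<and> \<not> 4 dvd Suc j)"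
proof (cases j)
  case 0
  then show ?thesis using assms by (auto simp: diag_row_def)
next
  case (Suc i)
  have "i mod 4 < 4" by simp
  then consider "i mod 4 = 0" | "i mod 4 = 1" | "i mod 4 = 2" | "i mod 4 = 3" by linarith
  then show ?thesis
    using assms unfolding Suc by cases (auto simp: diag_row_def mod_Suc dvd_eq_mod_eq_0)
qed

text \<open>
  By \<open>diag_row_near\<close>, column \<open>j + 1\<close> is needed to dominate column \<open>j\<close> only if
  \<open>4\<close> does not divide \<open>j + 1\<close>; the extra vertex stands in for the missing column \<open>n\<close>.
\<close>

definition grid4_diag_set :: "nat \<Rightarrow> (nat \<times> nat) set" where
  "grid4_diag_set n = (\<lambda>j. (diag_row j, j)) ` {..<n}
     \<union> (if 4 dvd n then {} else {(diag_row n, n - 1)})"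

lemma card_grid4_diag_set: "card (grid4_diag_set n) \<le> n + (if 4 dvd n then 0 else 1)"
proof -
  have "card (grid4_diag_set n) \<le> card ((\<lambda>j. (diag_row j, j)) ` {..<n})
      + card (if 4 dvd n then {} else {(diag_row n, n - 1)})"
    unfolding grid4_diag_set_def by (rule card_Un_le)
  then show ?thesis
    using card_image_le[of "{..<n}" "\<lambda>j. (diag_row j, j)"] by (cases "4 dvd n") simp_all
qed

lemma grid4_diag_set_dominating: "dominating (grid_verts 4 n) grid_adj (grid4_diag_set n)"
  unfolding dominating_def
proof (intro conjI ballI)
  show "grid4_diag_set n \<subseteq> grid_verts 4 n"
    by (auto simp: grid4_diag_set_def diag_row_less intro!: diff_less gr0I)
next
  fix v assume v: "v \<in> grid_verts 4 n - grid4_diag_set n"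
  obtain r j where rj: "v = (r, j)" by fastforce
  have col: "(diag_row k, k) \<in> grid4_diag_set n" if "k < n" for k
    using that by (simp add: grid4_diag_set_def)
  from diag_row_near[of r j] consider
      "r = diag_row j \<or> r = diag_row j + 1 \<or> diag_row j = r + 1"
    | "0 < j" "diag_row (j - 1) = r"
    | "diag_row (Suc j) = r" "\<not> 4 dvd Suc j"
    using v rj by auto
  then show "\<exists>u\<in>grid4_diag_set n. grid_adj u v"
  proof cases
    case 1
    with v rj col[of j] show ?thesis
      by (intro bexI[of _ "(diag_row j, j)"]) (auto simp: grid_adj_iff)
  next
    case 2
    with v rj col[of "j - 1"] show ?thesis
      by (intro bexI[of _ "(r, j - 1)"]) (auto simp: grid_adj_iff)
  next
    case 3
    have "Suc j \<noteq> n"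
      using 3 v rj by (auto simp: grid4_diag_set_def)
    with 3 v rj col[of "Suc j"] show ?thesis
      by (intro bexI[of _ "(r, Suc j)"]) (auto simp: grid_adj_iff)
  qed
qed

lemma grid4_domination_number_le:
  "domination_number (grid_verts 4 n) grid_adj \<le> n + (if 4 dvd n then 0 else 1)"
  using domination_number_le[OF grid4_diag_set_dominating] card_grid4_diag_set
  by (rule order_trans)

lemma grid4_connected_domination_number_le:
  assumes "1 \<le> n"
  shows "connected_domination_number (grid_verts 4 n) grid_adj \<le> n + 2 * ((n + 2) div 3)"
proof -
  have "connected_dominating (grid_verts 4 n) grid_adj (grid4_stub_set n)"
    unfolding connected_dominating_def
    using grid4_stub_set_dominating grid4_stub_set_connected[OF assms] by blast
  from connected_domination_number_le[OF this] card_grid4_stub_set show ?thesis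
    by (rule order_trans)
qed

lemma grid4_bound_arith:
  fixes n g c t :: nat
  assumes "4 \<le> n" "6 * n \<le> 5 * t" "g \<le> n + (if 4 dvd n then 0 else 1)"
    and "c \<le> n + 2 * ((n + 2) div 3)"
  shows "3 * g + 2 * c \<le> 6 * t"
proof (cases "n \<le> 6")
  case True
  \<comment> \<open>the linear estimate fails here; for \<open>n = 4\<close> the sharper \<open>\<gamma> \<le> n\<close> is essential\<close>
  then consider "n = 4" | "n = 5" | "n = 6" using assms(1) by linarith
  then show ?thesis using assms by cases simp_all
next
  case False
  have "3 * ((n + 2) div 3) \<le> n + 2" by simp
  with False assms show ?thesis by (simp split: if_splits)
qed

lemma ceiling_mean_le:
  fixes g c t :: nat
  assumes "3 * g + 2 * c \<le> 6 * t"
  shows "\<lceil>(3 * real g + 2 * real c) / 6\<rceil> \<le> int t"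
proof -
  have "real (3 * g + 2 * c) \<le> real (6 * t)"
    using assms by (simp only: of_nat_le_iff)
  then show ?thesis by (simp add: ceiling_le_iff)
qed

theorem proposition2p16:
  fixes m n :: nat
  assumes "(m = 3 \<and> n \<ge> 3) \<or> (m = 4 \<and> n \<ge> 4)"
  shows "int (total_domination_number (grid_verts m n) grid_adj)
    \<ge> \<lceil>(3 * real (domination_number (grid_verts m n) grid_adj)
                 + 2 * real (connected_domination_number (grid_verts m n) grid_adj)) / 6\<rceil>"
  using assms
proof
  assume "m = 3 \<and> n \<ge> 3"
  then have "m = 3" "1 \<le> n" by auto
  show ?thesis unfolding \<open>m = 3\<close>
    using grid3_total_domination_number_ge[of n] grid3_domination_numbers_le[OF \<open>1 \<le> n\<close>]
    by (intro ceiling_mean_le) linarith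
next
  assume "m = 4 \<and> n \<ge> 4"
  then have "m = 4" "4 \<le> n" by auto
  moreover have "1 \<le> n" using \<open>4 \<le> n\<close> by simp
  ultimately show ?thesis
    using grid4_bound_arith[OF \<open>4 \<le> n\<close> grid4_total_domination_number_ge
        grid4_domination_number_le grid4_connected_domination_number_le]
    by (simp add: ceiling_mean_le)
qed

end
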